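(* Let $\mathsf{L}\in\{\mathbf{PD},\mathsf{InqL},\mathbf{PT}\}$. For all formulas $\phi,\psi$ in the language of $\mathsf{L}$ and every flat substitution $\sigma$ of $\mathsf{L}$: if $\phi\vdash_{\mathsf L}\psi$ then $\sigma(\phi)\vdash_{\mathsf L}\sigma(\psi)$. In particular, $\phi\equiv\psi$ implies $\sigma(\phi)\equiv\sigma(\psi)$ for every flat substitution $\sigma$.
   Context: Fix a countably infinite set Prop of propositional variables. A valuation is a function $v:\mathrm{Prop}\to\{0,1\}$; a team is a set of valuations. Formulas of $\mathbf{PT}$: $\phi::=p\mid\bot\mid\top\mid\,=\!(\phi_1,\dots,\phi_n,\phi)\mid\neg\phi\mid\phi\wedge\phi\mid\phi\otimes\phi\mid\phi\vee\phi\mid\phi\to\phi$. Satisfaction on a team $X$: $X\models p$ iff $v(p)=1$ for all $v\in X$; $X\models\bot$ iff $X=\emptyset$; $X\models\top$ always; $\wedge$ is conjunction of conditions; $X\models\phi\otimes\psi$ iff $X=Y\cup Z$ with $Y\models\phi$, $Z\models\psi$; $X\models\phi\vee\psi$ iff $X\models\phi$ or $X\models\psi$; $X\models\phi\to\psi$ iff every $Y\subseteq X$ with $Y\models\phi$ satisfies $\psi$; $X\models\neg\phi$ iff $\{v\}\not\models\phi$ for all $v\in X$; $X\models\,=\!(\phi_1,\dots,\phi_n,\psi)$ iff $X\models\bigwedge_i(\phi_i\vee(\phi_i\to\bot))\to(\psi\vee(\psi\to\bot))$. $\phi$ is flat if for all teams $X$: $X\models\phi$ iff $\{v\}\models\phi$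 for all $v\in X$. Formulas of $\mathbf{PD}$: $\phi::=p\mid\bot\mid\top\mid\,=\!(\vec\alpha,\beta)\mid\neg\phi\mid\phi\wedge\phi\mid\phi\otimes\phi$ with $\vec\alpha,\beta$ flat, evaluated by the same clauses (for flat arguments: $X\models\,=\!(\vec\alpha,\beta)$ iff any $v,v'\in X$ agreeing on the truth of each $\alpha_i$ on singletons also agree on the truth of $\beta$). $\mathsf{InqL}$: formulas built from $p,\bot,\top$ by $\wedge,\vee,\to$ with the same clauses. For finite $\Gamma$, $\Gamma\vdash_{\mathsf L}\phi$ iff all formulas are in the language of $\mathsf L$ and every team satisfying all of $\Gamma$ satisfies $\phi$. $\phi\equiv\psi$ means $\phi$ and $\psi$ are satisfied by exactly the same teams. A substitution of $\mathsf L$ is a map on $\mathsf L$-formulas commuting with all connectives and atoms (including $\neg$ and $=\!(\cdot)$); it is flat if each $\sigma(p)$ is flat. *)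

theory Defs
  imports Main
begin

type_synonym valuation = "nat \<Rightarrow> bool"
type_synonym team = "valuation set"

datatype fm =
    Atom nat
  | Bot
  | Top
  | Dep "fm list" fm      (* =(phi_1,...,phi_n, phi) *)
  | Neg fm
  | Conj fm fm
  | Tensor fm fm
  | Disj fm fm            (* intuitionistic / inquisitive disjunction *)
  | Imp fm fm

text \<open>Satisfaction. The clause for the dependence atom is the literal unfolding of
  X |= /\_i (phi_i v (phi_i -> bot)) -> (psi v (psi -> bot)).\<close>
fun sat :: "team \<Rightarrow> fm \<Rightarrow> bool" where
  "sat X (Atom p) = (\<forall>v\<in>X. v p)"
| "sat X Bot = (X = {})"
| "sat X Top = True"
| "sat X (Dep phis psi) =
     (\<forall>Y\<subseteq>X. (\<forall>phi\<in>set phis. sat Y phi \<or> (\<forall>Z\<subseteq>Y. sat Z phi \<longrightarrow> Z = {}))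
        \<longrightarrow> (sat Y psi \<or> (\<forall>Z\<subseteq>Y. sat Z psi \<longrightarrow> Z = {})))"
| "sat X (Neg phi) = (\<forall>v\<in>X. \<not> sat {v} phi)"
| "sat X (Conj phi psi) = (sat X phi \<and> sat X psi)"
| "sat X (Tensor phi psi) = (\<exists>Y Z. X = Y \<union> Z \<and> sat Y phi \<and> sat Z psi)"
| "sat X (Disj phi psi) = (sat X phi \<or> sat X psi)"
| "sat X (Imp phi psi) = (\<forall>Y\<subseteq>X. sat Y phi \<longrightarrow> sat Y psi)"

definition flat :: "fm \<Rightarrow> bool" where
  "flat phi \<longleftrightarrow> (\<forall>X. sat X phi \<longleftrightarrow> (\<forall>v\<in>X. sat {v} phi))"

datatype logic = PD | InqL | PT

fun pd_fm :: "fm \<Rightarrow> bool" where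
  "pd_fm (Atom p) = True"
| "pd_fm Bot = True"
| "pd_fm Top = True"
| "pd_fm (Dep alphas beta) =
     ((\<forall>a\<in>set alphas. pd_fm a \<and> flat a) \<and> pd_fm beta \<and> flat beta)"
| "pd_fm (Neg phi) = pd_fm phi"
| "pd_fm (Conj phi psi) = (pd_fm phi \<and> pd_fm psi)"
| "pd_fm (Tensor phi psi) = (pd_fm phi \<and> pd_fm psi)"
| "pd_fm (Disj phi psi) = False"
| "pd_fm (Imp phi psi) = False"

fun inql_fm :: "fm \<Rightarrow> bool" where
  "inql_fm (Atom p) = True"
| "inql_fm Bot = True"
| "inql_fm Top = True"
| "inql_fm (Dep alphas beta) = False"
| "inql_fm (Neg phi) = False"
| "inql_fm (Conj phi psi) = (inql_fm phi \<and> inql_fm psi)"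
| "inql_fm (Tensor phi psi) = False"
| "inql_fm (Disj phi psi) = (inql_fm phi \<and> inql_fm psi)"
| "inql_fm (Imp phi psi) = (inql_fm phi \<and> inql_fm psi)"

fun in_lang :: "logic \<Rightarrow> fm \<Rightarrow> bool" where
  "in_lang PD phi = pd_fm phi"
| "in_lang InqL phi = inql_fm phi"
| "in_lang PT phi = True"

definition entails :: "logic \<Rightarrow> fm list \<Rightarrow> fm \<Rightarrow> bool" where
  "entails L Gamma phi \<longleftrightarrow>
     (\<forall>g\<in>set Gamma. in_lang L g) \<and> in_lang L phi \<and>
     (\<forall>X. (\<forall>g\<in>set Gamma. sat X g) \<longrightarrow> sat X phi)"

definition equiv_fm :: "fm \<Rightarrow> fm \<Rightarrow> bool" where
  "equiv_fm phi psi \<longleftrightarrow> (\<forall>X. sat X phi \<longleftrightarrow> sat X psi)"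

fun subst :: "(nat \<Rightarrow> fm) \<Rightarrow> fm \<Rightarrow> fm" where
  "subst s (Atom p) = s p"
| "subst s Bot = Bot"
| "subst s Top = Top"
| "subst s (Dep phis psi) = Dep (map (subst s) phis) (subst s psi)"
| "subst s (Neg phi) = Neg (subst s phi)"
| "subst s (Conj phi psi) = Conj (subst s phi) (subst s psi)"
| "subst s (Tensor phi psi) = Tensor (subst s phi) (subst s psi)"
| "subst s (Disj phi psi) = Disj (subst s phi) (subst s psi)"
| "subst s (Imp phi psi) = Imp (subst s phi) (subst s psi)"

definition flat_subst_of :: "logic \<Rightarrow> (nat \<Rightarrow> fm) \<Rightarrow> bool" where
  "flat_subst_of L s \<longleftrightarrow> (\<forall>p. in_lang L (s p) \<and> flat (s p))"

end

theory Submission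
  imports Defs
begin

text \<open>A flat formula is determined by the singleton teams satisfying it, so a flat
  substitution s acts semantically as the map on valuations sending v to the valuation
  p \<mapsto> ({v} \<Turnstile> s p). A team X satisfies subst s phi iff the image of X under this
  map satisfies phi; hence every consequence between phi and psi transfers to their
  substitution instances. The induction goes through because subteams of an image are
  images of subteams, and every splitting of an image lifts to a splitting of X by
  preimages.\<close>

lemma all_subset_image_iff:
  "(\<forall>B\<subseteq>f ` A. P B) \<longleftrightarrow> (\<forall>C\<subseteq>A. P (f ` C))"
  by (auto simp: subset_image_iff)

lemma image_Int_vimage: "f ` (A \<inter> f -` B) = f ` A \<inter> B"
  by blast

lemma image_eq_Un_iff:
  "(\<exists>B C. f ` A = B \<union> C \<and> P B \<and> Q C) \<longleftrightarrow>
   (\<exists>B C. A = B \<union> C \<and> P (f ` B) \<and> Q (f ` C))"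
proof
  assume "\<exists>B C. f ` A = B \<union> C \<and> P B \<and> Q C"
  then obtain B C where split: "f ` A = B \<union> C" and "P B" "Q C" by blast
  show "\<exists>B C. A = B \<union> C \<and> P (f ` B) \<and> Q (f ` C)"
  proof (intro exI conjI)
    show "A = (A \<inter> f -` B) \<union> (A \<inter> f -` C)" using split by blast
    have "f ` (A \<inter> f -` B) = B" "f ` (A \<inter> f -` C) = C"
      using split by (auto simp: image_Int_vimage)
    with \<open>P B\<close> \<open>Q C\<close> show "P (f ` (A \<inter> f -` B))" "Q (f ` (A \<inter> f -` C))"
      by simp_all
  qed
next
  assume "\<exists>B C. A = B \<union> C \<and> P (f ` B) \<and> Q (f ` C)"
  then obtain B C where "A = B \<union> C" "P (f ` B)" "Q (f ` C)" by blast
  then show "\<exists>B C. f ` A = B \<union> C \<and> P B \<and> Q C"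
    by (intro exI[of _ "f ` B"] exI[of _ "f ` C"]) (simp add: image_Un)
qed

definition val_subst :: "(nat \<Rightarrow> fm) \<Rightarrow> valuation \<Rightarrow> valuation" where
  "val_subst s v = (\<lambda>p. sat {v} (s p))"

lemma sat_subst:
  assumes "\<forall>p. flat (s p)"
  shows "sat X (subst s phi) \<longleftrightarrow> sat (val_subst s ` X) phi"
proof (induction phi arbitrary: X)
  case (Atom p)
  have "sat X (s p) \<longleftrightarrow> (\<forall>v\<in>X. sat {v} (s p))"
    using assms unfolding flat_def by blast
  then show ?case by (simp add: val_subst_def)
next
  case (Dep phis psi)
  then show ?case by (simp add: all_subset_image_iff)
next
  case (Tensor phi psi)
  then show ?case by (simp add: image_eq_Un_iff)
next
  case (Imp phi psi)
  then show ?case by (simp add: all_subset_image_iff)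
qed simp_all

lemma flat_subst:
  assumes "\<forall>p. flat (s p)" and "flat phi"
  shows "flat (subst s phi)"
  unfolding flat_def
proof
  fix X
  have "sat X (subst s phi) \<longleftrightarrow> sat (val_subst s ` X) phi"
    using assms(1) by (rule sat_subst)
  also have "\<dots> \<longleftrightarrow> (\<forall>w\<in>val_subst s ` X. sat {w} phi)"
    using assms(2) unfolding flat_def by (rule spec)
  also have "\<dots> \<longleftrightarrow> (\<forall>v\<in>X. sat {val_subst s v} phi)"
    by simp
  also have "\<dots> \<longleftrightarrow> (\<forall>v\<in>X. sat {v} (subst s phi))"
    using sat_subst[OF assms(1), of "{_}"] by simp
  finally show "sat X (subst s phi) \<longleftrightarrow> (\<forall>v\<in>X. sat {v} (subst s phi))" .
qed

lemma pd_fm_subst: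
  assumes "\<forall>p. pd_fm (s p) \<and> flat (s p)" and "pd_fm phi"
  shows "pd_fm (subst s phi)"
  using assms(2) by (induction phi) (use assms(1) flat_subst in auto)

lemma inql_fm_subst:
  assumes "\<forall>p. inql_fm (s p)" and "inql_fm phi"
  shows "inql_fm (subst s phi)"
  using assms(2) by (induction phi) (use assms(1) in auto)

lemma in_lang_subst:
  assumes "flat_subst_of L s" and "in_lang L phi"
  shows "in_lang L (subst s phi)"
  using assms by (cases L) (auto simp: flat_subst_of_def intro: pd_fm_subst inql_fm_subst)

lemma entails_subst:
  assumes "flat_subst_of L s" and "entails L Gamma phi"
  shows "entails L (map (subst s) Gamma) (subst s phi)"
proof -
  have "\<forall>p. flat (s p)" using assms(1) by (simp add: flat_subst_of_def)
  then show ?thesis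
    using assms in_lang_subst by (auto simp: entails_def sat_subst)
qed

lemma equiv_fm_subst:
  assumes "\<forall>p. flat (s p)" and "equiv_fm phi psi"
  shows "equiv_fm (subst s phi) (subst s psi)"
  using assms by (simp add: equiv_fm_def sat_subst)

theorem theorem3p7:
  fixes L :: logic and phi psi :: fm and s :: "nat \<Rightarrow> fm"
  assumes "in_lang L phi" and "in_lang L psi" and "flat_subst_of L s"
  shows "(entails L [phi] psi \<longrightarrow> entails L [subst s phi] (subst s psi))
       \<and> (equiv_fm phi psi \<longrightarrow> equiv_fm (subst s phi) (subst s psi))"
  using assms(3) entails_subst[OF assms(3), of "[phi]" psi] equiv_fm_subst[of s phi psi]
  by (simp add: flat_subst_of_def)

end
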